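(* Let $\mathfrak{S}=(\mathcal{X},\mathsf{S},\gamma,(\Lambda_{a})_{a\in\mathcal{A}})$ be a spectral decomposition system for the Euclidean space $\mathfrak{H}$ and let $D$ be a nonempty $\mathsf{S}$-invariant subset of $\mathcal{X}$. Then: (i) $\operatorname{conv}\gamma^{-1}(D)=\gamma^{-1}(\operatorname{conv}D)$; (ii) if $D$ is convex, then $\operatorname{ext}\gamma^{-1}(D)=\gamma^{-1}(\operatorname{ext}D)$.
   Context: A Euclidean space is a finite-dimensional real inner product space; inner products are written $\langle\cdot,\cdot\rangle$ and norms $\|\cdot\|$. Let $\mathfrak{H}$ and $\mathcal{X}$ be Euclidean spaces, let $\mathsf{S}$ be a group acting on $\mathcal{X}$ by linear isometries, let $\gamma\colon\mathfrak{H}\to\mathcal{X}$, and let $(\Lambda_a)_{a\in\mathcal{A}}$ be a family of linear operators from $\mathcal{X}$ to $\mathfrak{H}$. The orbit of $x$ is $\mathsf{S}\cdot x=\{s\cdot x: s\in\mathsf{S}\}$; a map $f$ on $\mathcal{X}$ is $\mathsf{S}$-invariant if $f(s\cdot x)=f(x)$ for all $s,x$; a subset $D$ of $\mathcal{X}$ is $\mathsf{S}$-invariant if $s\cdot x\in D$ whenever $x\in D$, $s\in\mathsf{S}$. The tuple is a spectral decomposition system for $\mathfrak{H}$ if: [A] every $\Lambda_a$ is an isometry; [B] there exists an $\mathsf{S}$-invariant $\tau\colon\mathcal{X}\to\mathcal{X}$ with $\tau(x)\in\mathsf{S}\cdot x$ for all $x$ and $\gamma\circ\Lambda_a=\tau$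 for all $a$; [C] for every $X\in\mathfrak{H}$ there is $a$ with $X=\Lambda_a\gamma(X)$; [D] $\langle X,Y\rangle\leq\langle\gamma(X),\gamma(Y)\rangle$ for all $X,Y\in\mathfrak{H}$. $\operatorname{conv}C$ is the convex hull of $C$; for convex $C$, $\operatorname{ext}C$ is its set of extreme points. *)

theory Defs
  imports "HOL-Analysis.Analysis" "HOL-Algebra.Group"
begin

definition isometric_action :: "('g, 'm) monoid_scheme \<Rightarrow> ('g \<Rightarrow> 'x::euclidean_space \<Rightarrow> 'x) \<Rightarrow> bool" where
  "isometric_action G act \<longleftrightarrow>
     group G \<and>
     (\<forall>x. act \<one>\<^bsub>G\<^esub> x = x) \<and>
     (\<forall>g\<in>carrier G. \<forall>h\<in>carrier G. \<forall>x. act (g \<otimes>\<^bsub>G\<^esub> h) x = act g (act h x)) \<and>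
     (\<forall>g\<in>carrier G. linear (act g) \<and> (\<forall>x. norm (act g x) = norm x))"

definition orbit :: "('g, 'm) monoid_scheme \<Rightarrow> ('g \<Rightarrow> 'x \<Rightarrow> 'x) \<Rightarrow> 'x \<Rightarrow> 'x set" where
  "orbit G act x = {act g x | g. g \<in> carrier G}"

definition invariant_fun :: "('g, 'm) monoid_scheme \<Rightarrow> ('g \<Rightarrow> 'x \<Rightarrow> 'x) \<Rightarrow> ('x \<Rightarrow> 'b) \<Rightarrow> bool" where
  "invariant_fun G act f \<longleftrightarrow> (\<forall>g\<in>carrier G. \<forall>x. f (act g x) = f x)"

definition invariant_set :: "('g, 'm) monoid_scheme \<Rightarrow> ('g \<Rightarrow> 'x \<Rightarrow> 'x) \<Rightarrow> 'x set \<Rightarrow> bool" where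
  "invariant_set G act D \<longleftrightarrow> (\<forall>g\<in>carrier G. \<forall>x\<in>D. act g x \<in> D)"

definition spectral_decomposition_system ::
  "('g, 'm) monoid_scheme \<Rightarrow> ('g \<Rightarrow> 'x::euclidean_space \<Rightarrow> 'x) \<Rightarrow> ('h::euclidean_space \<Rightarrow> 'x)
   \<Rightarrow> ('a \<Rightarrow> 'x \<Rightarrow> 'h) \<Rightarrow> bool" where
  "spectral_decomposition_system G act \<gamma> \<Lambda> \<longleftrightarrow>
     isometric_action G act \<and>
     (\<forall>a. linear (\<Lambda> a) \<and> (\<forall>x. norm (\<Lambda> a x) = norm x)) \<and>
     (\<exists>\<tau>. invariant_fun G act \<tau> \<and> (\<forall>x. \<tau> x \<in> orbit G act x) \<and> (\<forall>a. \<gamma> \<circ> \<Lambda> a = \<tau>)) \<and>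
     (\<forall>X. \<exists>a. X = \<Lambda> a (\<gamma> X)) \<and>
     (\<forall>X Y. inner X Y \<le> inner (\<gamma> X) (\<gamma> Y))"

definition ext :: "'v::real_vector set \<Rightarrow> 'v set" where
  "ext C = {x. x extreme_point_of C}"

end

theory Submission
  imports Defs
begin

text \<open>The key fact is that for a decomposition \<open>X = \<Lambda> a (\<gamma> X)\<close> the adjoint \<open>\<Lambda>\<^sup>*\<^sub>a\<close>
  maps every \<open>Y\<close> into the convex hull of the orbit of \<open>\<gamma> Y\<close>: otherwise a hyperplane separates
  them, and moving the normal vector of that hyperplane into normal form by \<open>\<tau>\<close> contradicts
  the inequality \<open>\<langle>X, Y\<rangle> \<le> \<langle>\<gamma> X, \<gamma> Y\<rangle>\<close>. Since \<open>\<gamma> = \<Lambda>\<^sup>*\<^sub>a\<close> at \<open>X\<close>, convex combinations in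
  \<open>\<gamma>\<inverse>(D)\<close> are mapped by \<open>\<gamma>\<close> into the convex hull of \<open>D\<close>, and conversely \<open>\<Lambda> a\<close> maps
  \<open>D\<close> into \<open>\<gamma>\<inverse>(D)\<close>. For extreme points one uses in addition that an extreme point of \<open>D\<close>
  lying in the convex hull of an orbit belongs to that orbit, so has the right norm to force
  equality in Cauchy-Schwarz.\<close>

lemma inner_linear_norm_preserving:
  fixes f :: "'u::real_inner \<Rightarrow> 'v::real_inner"
  assumes "linear f" "\<And>x. norm (f x) = norm x"
  shows "inner (f x) (f y) = inner x y"
proof -
  have sq: "inner (f z) (f z) = inner z z" for z
    using assms(2)[of z] by (simp add: dot_square_norm)
  show ?thesis
    using sq[of "x + y"] sq[of x] sq[of y]
    by (simp add: linear_add[OF assms(1)] inner_add_left inner_add_right inner_commute)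
qed

lemma eq_if_norm_eq_inner_ge:
  fixes x y :: "'u::real_inner"
  assumes "norm x = norm y" "inner x y \<ge> norm x ^ 2"
  shows "x = y"
proof -
  have "norm (x - y)^2 = norm x^2 + norm y^2 - 2 * inner x y"
    by (simp add: power2_norm_eq_inner inner_diff_left inner_diff_right inner_commute)
  also have "\<dots> \<le> 0" using assms by simp
  finally show ?thesis by simp
qed

locale isometric_group_action =
  fixes G (structure) and act :: "'g \<Rightarrow> 'x::euclidean_space \<Rightarrow> 'x"
  assumes isometric_action: "isometric_action G act"
begin

sublocale group G
  using isometric_action by (simp add: isometric_action_def)

lemma act_one: "act \<one> x = x"
  and act_mult: "g \<in> carrier G \<Longrightarrow> h \<in> carrier G \<Longrightarrow> act (g \<otimes> h) x = act g (act h x)"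
  and linear_act: "g \<in> carrier G \<Longrightarrow> linear (act g)"
  and norm_act: "g \<in> carrier G \<Longrightarrow> norm (act g x) = norm x"
  using isometric_action by (auto simp: isometric_action_def)

lemma act_act_inv: "g \<in> carrier G \<Longrightarrow> act g (act (inv g) x) = x"
  by (metis act_mult act_one inv_closed r_inv)

lemma inner_act_left:
  assumes "g \<in> carrier G"
  shows "inner (act g v) w = inner v (act (inv g) w)"
proof -
  have "inner (act g v) w = inner (act g v) (act g (act (inv g) w))"
    using assms by (simp add: act_act_inv)
  also have "\<dots> = inner v (act (inv g) w)"
    using assms by (intro inner_linear_norm_preserving linear_act norm_act)
  finally show ?thesis .
qed

lemma in_orbitI: "g \<in> carrier G \<Longrightarrow> y = act g x \<Longrightarrow> y \<in> orbit G act x"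
  unfolding orbit_def by blast

lemma self_in_orbit: "x \<in> orbit G act x"
  by (rule in_orbitI[OF one_closed]) (simp add: act_one)

lemma orbit_eq:
  assumes "y \<in> orbit G act x"
  shows "orbit G act y = orbit G act x"
proof -
  obtain h where h: "h \<in> carrier G" "y = act h x"
    using assms by (auto simp: orbit_def)
  have "act k x \<in> orbit G act y" if k: "k \<in> carrier G" for k
  proof (rule in_orbitI)
    show "k \<otimes> inv h \<in> carrier G" using k h(1) by simp
    have "(k \<otimes> inv h) \<otimes> h = k" using k h(1) by (simp add: m_assoc)
    then show "act k x = act (k \<otimes> inv h) y"
      using k h by (simp add: act_mult[symmetric])
  qed
  moreover have "act k y \<in> orbit G act x" if k: "k \<in> carrier G" for k
    using k h by (intro in_orbitI[of "k \<otimes> h"]) (simp_all add: act_mult)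
  ultimately show ?thesis by (auto simp: orbit_def)
qed

lemma norm_orbit: "y \<in> orbit G act x \<Longrightarrow> norm y = norm x"
  by (auto simp: orbit_def norm_act)

lemma bounded_orbit: "bounded (orbit G act x)"
  using norm_orbit by (intro boundedI[of _ "norm x"]) auto

lemma orbit_subset: "invariant_set G act C \<Longrightarrow> x \<in> C \<Longrightarrow> orbit G act x \<subseteq> C"
  by (auto simp: orbit_def invariant_set_def)

lemma invariant_set_convex_hull:
  assumes "invariant_set G act D"
  shows "invariant_set G act (convex hull D)"
  unfolding invariant_set_def
proof (intro ballI)
  fix g y assume g: "g \<in> carrier G" and "y \<in> convex hull D"
  then have "act g y \<in> convex hull (act g ` D)"
    by (simp add: convex_hull_linear_image[OF linear_act, symmetric])
  also have "\<dots> \<subseteq> convex hull D"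
    using assms g by (intro hull_mono) (auto simp: invariant_set_def)
  finally show "act g y \<in> convex hull D" .
qed

end

locale spectral_decomposition = isometric_group_action +
  fixes \<gamma> :: "'h::euclidean_space \<Rightarrow> 'x::euclidean_space" and \<Lambda> :: "'a \<Rightarrow> 'x \<Rightarrow> 'h"
    and \<tau> :: "'x \<Rightarrow> 'x"
  assumes linear_\<Lambda>: "linear (\<Lambda> a)"
    and norm_\<Lambda>: "norm (\<Lambda> a x) = norm x"
    and \<tau>_act: "g \<in> carrier G \<Longrightarrow> \<tau> (act g x) = \<tau> x"
    and \<tau>_in_orbit: "\<tau> x \<in> orbit G act x"
    and \<gamma>_\<Lambda>: "\<gamma> (\<Lambda> a x) = \<tau> x"
    and decomposition: "\<exists>a. X = \<Lambda> a (\<gamma> X)"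
    and inner_le_inner_\<gamma>: "inner X Y \<le> inner (\<gamma> X) (\<gamma> Y)"

lemma spectral_decomposition_systemE:
  assumes "spectral_decomposition_system G act \<gamma> \<Lambda>"
  obtains \<tau> where "spectral_decomposition G act \<gamma> \<Lambda> \<tau>"
proof -
  from assms obtain \<tau> where "invariant_fun G act \<tau>" "\<forall>x. \<tau> x \<in> orbit G act x"
    and "\<forall>a. \<gamma> \<circ> \<Lambda> a = \<tau>"
    unfolding spectral_decomposition_system_def by blast
  with assms have "spectral_decomposition G act \<gamma> \<Lambda> \<tau>"
    unfolding spectral_decomposition_def spectral_decomposition_axioms_def
      isometric_group_action_def spectral_decomposition_system_def invariant_fun_def
    by (simp add: fun_eq_iff)
  then show thesis by (rule that)
qed

context spectral_decomposition
begin

lemma inner_\<Lambda>: "inner (\<Lambda> a x) (\<Lambda> a y) = inner x y"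
  by (rule inner_linear_norm_preserving[OF linear_\<Lambda> norm_\<Lambda>])

lemma norm_\<gamma>: "norm (\<gamma> X) = norm X"
  using decomposition[of X] norm_\<Lambda> by metis

lemma norm_\<tau>: "norm (\<tau> x) = norm x"
  using norm_orbit[OF \<tau>_in_orbit] .

lemma inner_le_inner_\<tau>: "inner u x \<le> inner (\<tau> u) (\<tau> x)"
  using inner_le_inner_\<gamma>[of "\<Lambda> a u" "\<Lambda> a x" for a] by (simp add: inner_\<Lambda> \<gamma>_\<Lambda>)

lemma adjoint_\<Lambda>_\<Lambda>: "adjoint (\<Lambda> a) (\<Lambda> a v) = v"
proof -
  have "inner (adjoint (\<Lambda> a) (\<Lambda> a v) - v) w = 0" for w
    by (simp add: inner_diff_left adjoint_clauses(2)[OF linear_\<Lambda>] inner_\<Lambda>)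
  from this[of "adjoint (\<Lambda> a) (\<Lambda> a v) - v"] show ?thesis by simp
qed

lemma linear_adjoint_\<Lambda>: "linear (adjoint (\<Lambda> a))"
  by (rule adjoint_linear[OF linear_\<Lambda>])

lemma \<gamma>_eq_adjoint_\<Lambda>: "X = \<Lambda> a (\<gamma> X) \<Longrightarrow> \<gamma> X = adjoint (\<Lambda> a) X"
  using adjoint_\<Lambda>_\<Lambda>[of a "\<gamma> X"] by simp

lemma \<Lambda>_in_vimage:
  assumes "invariant_set G act D" "d \<in> D"
  shows "\<Lambda> a d \<in> \<gamma> -` D"
  using orbit_subset[OF assms] \<tau>_in_orbit[of d] by (auto simp: \<gamma>_\<Lambda>)

lemma closed_orbit: "closed (orbit G act x)"
  unfolding closure_subset_eq[symmetric]
proof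
  fix y assume y: "y \<in> closure (orbit G act x)"
  have "orbit G act x \<subseteq> sphere 0 (norm x)"
    by (auto simp: orbit_def norm_act)
  from closure_minimal[OF this closed_sphere] y
  have "norm (\<tau> y) = norm (\<tau> x)" by (auto simp: norm_\<tau>)
  moreover have "inner y (act g x) \<le> inner (\<tau> y) (\<tau> x)" if "g \<in> carrier G" for g
    using inner_le_inner_\<tau>[of y "act g x"] \<tau>_act[OF that] by simp
  then have "orbit G act x \<subseteq> {w. inner y w \<le> inner (\<tau> y) (\<tau> x)}"
    unfolding orbit_def by blast
  from closure_minimal[OF this closed_halfspace_le] y
  have "norm (\<tau> y) ^ 2 \<le> inner (\<tau> y) (\<tau> x)"
    by (auto simp: norm_\<tau> dot_square_norm)
  ultimately have "\<tau> y = \<tau> x"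
    by (rule eq_if_norm_eq_inner_ge)
  have "y \<in> orbit G act (\<tau> y)"
    using self_in_orbit[of y] by (simp add: orbit_eq[OF \<tau>_in_orbit])
  also have "\<dots> = orbit G act x"
    by (simp add: \<open>\<tau> y = \<tau> x\<close> orbit_eq[OF \<tau>_in_orbit])
  finally show "y \<in> orbit G act x" .
qed

lemma compact_orbit: "compact (orbit G act x)"
  using bounded_orbit closed_orbit by (simp add: compact_eq_bounded_closed)

lemma adjoint_\<Lambda>_in_convex_hull_orbit: "adjoint (\<Lambda> a) Y \<in> convex hull (orbit G act (\<gamma> Y))"
proof (rule ccontr)
  let ?K = "convex hull (orbit G act (\<gamma> Y))"
  assume "adjoint (\<Lambda> a) Y \<notin> ?K"
  then obtain u b where ub: "inner u (adjoint (\<Lambda> a) Y) < b" "\<forall>k\<in>?K. b < inner u k"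
    using separating_hyperplane_closed_point[OF convex_convex_hull]
      compact_imp_closed[OF compact_convex_hull[OF compact_orbit]] by metis
  obtain g where g: "g \<in> carrier G" "\<tau> (-u) = act g (-u)"
    using \<tau>_in_orbit[of "-u"] by (auto simp: orbit_def)
  have "inner (-u) (adjoint (\<Lambda> a) Y) = inner (\<Lambda> a (-u)) Y"
    by (simp add: adjoint_clauses(1)[OF linear_\<Lambda>])
  also have "\<dots> \<le> inner (\<tau> (-u)) (\<gamma> Y)"
    using inner_le_inner_\<gamma>[of "\<Lambda> a (-u)" Y] by (simp add: \<gamma>_\<Lambda>)
  also have "\<dots> = inner (-u) (act (inv g) (\<gamma> Y))"
    using g by (simp add: inner_act_left)
  finally have "inner u (act (inv g) (\<gamma> Y)) \<le> inner u (adjoint (\<Lambda> a) Y)" by simp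
  moreover have "act (inv g) (\<gamma> Y) \<in> ?K"
    using g by (intro hull_inc) (auto simp: orbit_def)
  ultimately show False using ub by force
qed

lemma adjoint_\<Lambda>_in_invariant_convex:
  assumes "convex C" "invariant_set G act C" "\<gamma> Y \<in> C"
  shows "adjoint (\<Lambda> a) Y \<in> C"
  using adjoint_\<Lambda>_in_convex_hull_orbit hull_minimal[of _ C convex] orbit_subset[OF assms(2,3)] assms(1)
  by blast

lemma convex_vimage_\<gamma>:
  assumes "convex C" "invariant_set G act C"
  shows "convex (\<gamma> -` C)"
proof (rule convexI)
  fix X Y and u v :: real
  assume XY: "X \<in> \<gamma> -` C" "Y \<in> \<gamma> -` C" and uv: "0 \<le> u" "0 \<le> v" "u + v = 1"
  obtain a where "u *\<^sub>R X + v *\<^sub>R Y = \<Lambda> a (\<gamma> (u *\<^sub>R X + v *\<^sub>R Y))"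
    using decomposition by blast
  then have "\<gamma> (u *\<^sub>R X + v *\<^sub>R Y) = adjoint (\<Lambda> a) (u *\<^sub>R X + v *\<^sub>R Y)"
    by (rule \<gamma>_eq_adjoint_\<Lambda>)
  also have "\<dots> = u *\<^sub>R adjoint (\<Lambda> a) X + v *\<^sub>R adjoint (\<Lambda> a) Y"
    by (simp add: linear_add[OF linear_adjoint_\<Lambda>] linear_scale[OF linear_adjoint_\<Lambda>])
  also have "\<dots> \<in> C"
    using XY assms by (intro convexD[OF assms(1) _ _ uv] adjoint_\<Lambda>_in_invariant_convex) auto
  finally show "u *\<^sub>R X + v *\<^sub>R Y \<in> \<gamma> -` C" by simp
qed

lemma convex_hull_vimage_\<gamma>:
  assumes "invariant_set G act D"
  shows "convex hull (\<gamma> -` D) = \<gamma> -` (convex hull D)"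
proof
  show "convex hull (\<gamma> -` D) \<subseteq> \<gamma> -` (convex hull D)"
    using convex_vimage_\<gamma>[OF convex_convex_hull invariant_set_convex_hull[OF assms]]
    by (intro hull_minimal vimage_mono hull_subset)
  show "\<gamma> -` (convex hull D) \<subseteq> convex hull (\<gamma> -` D)"
  proof
    fix X assume "X \<in> \<gamma> -` (convex hull D)"
    moreover obtain a where "X = \<Lambda> a (\<gamma> X)" using decomposition by blast
    ultimately have "X \<in> \<Lambda> a ` (convex hull D)" by (metis image_eqI vimageD)
    also have "\<dots> = convex hull (\<Lambda> a ` D)" by (rule convex_hull_linear_image[OF linear_\<Lambda>])
    also have "\<dots> \<subseteq> convex hull (\<gamma> -` D)" using assms \<Lambda>_in_vimage by (intro hull_mono) auto
    finally show "X \<in> convex hull (\<gamma> -` D)" .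
  qed
qed

lemma extreme_point_of_\<gamma>:
  assumes "invariant_set G act D" "X extreme_point_of (\<gamma> -` D)"
  shows "\<gamma> X extreme_point_of D"
  unfolding extreme_point_of_def
proof (intro conjI ballI notI)
  show "\<gamma> X \<in> D" using assms(2) by (simp add: extreme_point_of_def)
  obtain a where a: "X = \<Lambda> a (\<gamma> X)" using decomposition by blast
  fix p q assume pq: "p \<in> D" "q \<in> D" and "\<gamma> X \<in> open_segment p q"
  then obtain t where t: "p \<noteq> q" "0 < t" "t < 1" "\<gamma> X = (1 - t) *\<^sub>R p + t *\<^sub>R q"
    by (auto simp: in_segment)
  then have "X = (1 - t) *\<^sub>R \<Lambda> a p + t *\<^sub>R \<Lambda> a q"
    using a by (simp add: linear_add[OF linear_\<Lambda>] linear_scale[OF linear_\<Lambda>])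
  moreover have "\<Lambda> a p \<noteq> \<Lambda> a q" using t(1) adjoint_\<Lambda>_\<Lambda> by metis
  ultimately have "X \<in> open_segment (\<Lambda> a p) (\<Lambda> a q)" using t by (auto simp: in_segment)
  then show False
    using assms \<Lambda>_in_vimage[OF assms(1) pq(1)] \<Lambda>_in_vimage[OF assms(1) pq(2)]
    by (auto simp: extreme_point_of_def)
qed

lemma eq_if_adjoint_\<Lambda>_eq_extreme_point:
  assumes "convex D" "invariant_set G act D" "\<gamma> X extreme_point_of D"
    and a: "X = \<Lambda> a (\<gamma> X)" and "\<gamma> Y \<in> D" and Y: "adjoint (\<Lambda> a) Y = \<gamma> X"
  shows "Y = X"
proof -
  have orbit_in_D: "convex hull (orbit G act (\<gamma> Y)) \<subseteq> D"
    using assms by (intro hull_minimal orbit_subset)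
  have "\<gamma> X \<in> convex hull (orbit G act (\<gamma> Y))"
    using adjoint_\<Lambda>_in_convex_hull_orbit Y by metis
  then have "\<gamma> X extreme_point_of convex hull (orbit G act (\<gamma> Y))"
    using assms(3) orbit_in_D by (auto simp: extreme_point_of_def)
  then have "norm X = norm Y"
    using extreme_point_of_convex_hull norm_orbit norm_\<gamma> by metis
  moreover have "norm X ^ 2 \<le> inner X Y"
  proof -
    have "inner X Y = inner (\<gamma> X) (adjoint (\<Lambda> a) Y)"
      using a by (metis adjoint_clauses(1)[OF linear_\<Lambda>])
    also have "\<dots> = norm X ^ 2"
      using Y by (simp add: dot_square_norm norm_\<gamma>)
    finally show ?thesis by simp
  qed
  ultimately have "X = Y" by (rule eq_if_norm_eq_inner_ge)
  then show ?thesis ..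
qed

lemma extreme_point_of_vimage_\<gamma>:
  assumes D: "convex D" "invariant_set G act D" and X: "\<gamma> X extreme_point_of D"
  shows "X extreme_point_of (\<gamma> -` D)"
  unfolding extreme_point_of_def
proof (intro conjI ballI notI)
  show "X \<in> \<gamma> -` D" using X by (simp add: extreme_point_of_def)
  obtain a where a: "X = \<Lambda> a (\<gamma> X)" using decomposition by blast
  fix Y Z assume YZ: "Y \<in> \<gamma> -` D" "Z \<in> \<gamma> -` D" and "X \<in> open_segment Y Z"
  then obtain t where t: "Y \<noteq> Z" "0 < t" "t < 1" "X = (1 - t) *\<^sub>R Y + t *\<^sub>R Z"
    by (auto simp: in_segment)
  then have \<gamma>X: "\<gamma> X = (1 - t) *\<^sub>R adjoint (\<Lambda> a) Y + t *\<^sub>R adjoint (\<Lambda> a) Z"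
    using \<gamma>_eq_adjoint_\<Lambda>[OF a]
    by (simp add: linear_add[OF linear_adjoint_\<Lambda>] linear_scale[OF linear_adjoint_\<Lambda>])
  have "adjoint (\<Lambda> a) Y \<in> D" "adjoint (\<Lambda> a) Z \<in> D"
    using YZ D by (auto intro: adjoint_\<Lambda>_in_invariant_convex)
  with X \<gamma>X t(2,3) have "adjoint (\<Lambda> a) Y = adjoint (\<Lambda> a) Z"
    by (auto simp: extreme_point_of_def in_segment)
  then have "adjoint (\<Lambda> a) Y = \<gamma> X" "adjoint (\<Lambda> a) Z = \<gamma> X"
    using \<gamma>X by (auto simp: algebra_simps)
  then show False
    using eq_if_adjoint_\<Lambda>_eq_extreme_point[OF D X a] YZ t(1) by auto
qed

end

theorem proposition4p9:
  fixes G :: "('g, 'm) monoid_scheme"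
    and act :: "'g \<Rightarrow> 'x::euclidean_space \<Rightarrow> 'x"
    and \<gamma> :: "'h::euclidean_space \<Rightarrow> 'x"
    and \<Lambda> :: "'a \<Rightarrow> 'x \<Rightarrow> 'h"
    and D :: "'x set"
  assumes "spectral_decomposition_system G act \<gamma> \<Lambda>"
    and "D \<noteq> {}"
    and "invariant_set G act D"
  shows "convex hull (\<gamma> -` D) = \<gamma> -` (convex hull D) \<and>
         (convex D \<longrightarrow> ext (\<gamma> -` D) = \<gamma> -` (ext D))"
proof -
  obtain \<tau> where "spectral_decomposition G act \<gamma> \<Lambda> \<tau>"
    using spectral_decomposition_systemE[OF assms(1)] .
  then interpret spectral_decomposition G act \<gamma> \<Lambda> \<tau> .
  have "ext (\<gamma> -` D) = \<gamma> -` (ext D)" if "convex D"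
    using extreme_point_of_\<gamma>[OF assms(3)] extreme_point_of_vimage_\<gamma>[OF that assms(3)]
    by (auto simp: ext_def)
  then show ?thesis
    using convex_hull_vimage_\<gamma>[OF assms(3)] by blast
qed

end
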